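(* Let $c=q_1^{a_1}\cdots q_\omega^{a_\omega}$ with $q_1,\dots,q_\omega$ distinct primes and $a_i\ge1$. If $a_i\ge 2$ for some $i$, then $E_c(q_i)=\frac{\varphi(c)}{q_i}$.
   Context: $\varphi$ is Euler's totient function. For a positive integer $c$ with distinct prime factors $q_1,\dots,q_\omega$ and real $x\ne 0$, $$E_c(x)=\sum_{S\subseteq\{1,\dots,\omega\}}(-1)^{|S|}\left\lfloor \frac{c}{x\prod_{j\in S}q_j}\right\rfloor.$$ *)

theory Defs
  imports "HOL-Number_Theory.Number_Theory"
begin

definition E :: "nat \<Rightarrow> real \<Rightarrow> int" where
  "E c x = (\<Sum>S\<in>Pow (prime_factors c).
      (-1) ^ card S * \<lfloor>real c / (x * real (\<Prod>q\<in>S. q))\<rfloor>)"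

end

theory Submission
  imports Defs
begin

text \<open>Whenever \<open>x\<close> times the radical of \<open>c\<close> divides \<open>c\<close>, every floor in \<open>E\<^sub>c(x)\<close> is an exact
  quotient, so \<open>E\<^sub>c(x) = (c/x) \<Prod>\<^sub>p (1 - 1/p) = \<phi>(c)/x\<close> by expanding the product over subsets.
  If \<open>q\<^sup>2\<close> divides \<open>c\<close>, then \<open>c/q\<close> has the same prime factors as \<open>c\<close>, so \<open>x = q\<close> qualifies.\<close>

lemma prod_prime_factors_dvd:
  fixes n :: nat
  shows "(\<Prod>p\<in>prime_factors n. p) dvd n"
proof (cases "n = 0")
  case False
  have "(\<Prod>p\<in>prime_factors n. p) dvd (\<Prod>p\<in>prime_factors n. p ^ multiplicity p n)"
    by (intro prod_dvd_prod dvd_power) (auto simp: prime_factors_multiplicity)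
  also have "\<dots> = n"
    using False by (simp add: prod_prime_factors)
  finally show ?thesis .
qed simp

lemma prime_factors_div_prime:
  fixes c q :: nat
  assumes "c > 0" and "prime q" and "q ^ 2 dvd c"
  shows "prime_factors (c div q) = prime_factors c"
proof -
  have c_eq: "c = q * (c div q)"
    using assms(3) by (auto simp: power2_eq_square)
  have "q dvd c div q"
    using assms(2,3) by (auto simp: power2_eq_square dvd_div_iff_mult prime_gt_0_nat)
  moreover have "c div q \<noteq> 0"
    using assms(1) c_eq by (metis mult_0_right neq0_conv)
  ultimately show ?thesis
    using assms(1,2) c_eq
    by (auto simp: prime_factors_dvd prime_dvd_mult_iff primes_dvd_imp_eq
             intro: dvd_mult_right)
qed

lemma prime_mult_prod_prime_factors_dvd:
  fixes c q :: nat
  assumes "c > 0" and "prime q" and "q ^ 2 dvd c"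
  shows "q * (\<Prod>p\<in>prime_factors c. p) dvd c"
proof -
  have "q * (\<Prod>p\<in>prime_factors c. p) = q * (\<Prod>p\<in>prime_factors (c div q). p)"
    using prime_factors_div_prime[OF assms] by simp
  also have "\<dots> dvd q * (c div q)"
    by (intro mult_dvd_mono dvd_refl prod_prime_factors_dvd)
  also have "\<dots> = c"
    using assms(3) by (auto simp: power2_eq_square)
  finally show ?thesis .
qed

lemma E_eq_totient_div:
  fixes c x :: nat
  assumes "c > 0" and "x > 0" and rad_dvd: "x * (\<Prod>p\<in>prime_factors c. p) dvd c"
  shows "real_of_int (E c (real x)) = real (totient c) / real x"
proof -
  let ?P = "prime_factors c"
  have term_eq: "real_of_int ((-1) ^ card S * \<lfloor>real c / (real x * real (\<Prod>p\<in>S. p))\<rfloor>)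
      = real c / real x * (\<Prod>p\<in>S. - 1 / real p)" if "S \<subseteq> ?P" for S
  proof -
    have "x * (\<Prod>p\<in>S. p) dvd x * (\<Prod>p\<in>?P. p)"
      using that by (intro mult_dvd_mono dvd_refl prod_dvd_prod_subset) simp_all
    then have "x * (\<Prod>p\<in>S. p) dvd c"
      using rad_dvd by (rule dvd_trans)
    then have floor_eq: "real_of_int \<lfloor>real c / (real x * real (\<Prod>p\<in>S. p))\<rfloor>
        = real c / (real x * real (\<Prod>p\<in>S. p))"
      by (metis floor_divide_of_nat_eq of_int_of_nat_eq of_nat_mult real_of_nat_div)
    have sign_eq: "(\<Prod>p\<in>S. - 1 / real p) = (-1) ^ card S / real (\<Prod>p\<in>S. p)"
      by (simp only: prod_dividef prod_constant of_nat_prod)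
    show ?thesis
      unfolding of_int_mult floor_eq sign_eq by simp
  qed
  have "real_of_int (E c (real x)) = (\<Sum>S\<in>Pow ?P. real c / real x * (\<Prod>p\<in>S. - 1 / real p))"
    unfolding E_def of_int_sum by (intro sum.cong refl term_eq) auto
  also have "\<dots> = real c / real x * (\<Sum>S\<in>Pow ?P. (\<Prod>p\<in>S. - 1 / real p) * (\<Prod>p\<in>?P - S. 1))"
    by (simp add: sum_distrib_left)
  also have "\<dots> = real c / real x * (\<Prod>p\<in>?P. 1 - 1 / real p)"
    by (subst prod_add[symmetric]) simp_all
  also have "\<dots> = real (totient c) / real x"
    by (simp add: totient_formula2)
  finally show ?thesis .
qed

theorem lemma3:
  fixes c q :: nat
  assumes "c > 0" and "prime q" and "q ^ 2 dvd c"
  shows "real_of_int (E c (real q)) = real (totient c) / real q"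
  using E_eq_totient_div[OF assms(1) prime_gt_0_nat[OF assms(2)]]
        prime_mult_prod_prime_factors_dvd[OF assms] by blast

end
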